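(* Let $A,B$ be complex $3\times 3$ matrices having the same minimal polynomial, and suppose this minimal polynomial has degree $2$. The following are equivalent: (1) $A$ and $B$ have identical pseudospectra (i.e. $\|(zI-A)^{-1}\|=\|(zI-B)^{-1}\|$ for all $z\in\mathbb{C}$) and $\chi_A=\chi_B$; (2) $A$ and $B$ are unitarily similar.
   Context: $\|\cdot\|$ is the spectral norm; by convention $\|(zI-T)^{-1}\|=\infty$ for $z$ an eigenvalue of $T$. $\chi_T(z)=\det(zI-T)$ is the characteristic polynomial. *)

theory Defs
  imports "HOL-Analysis.Analysis" "HOL-Computational_Algebra.Polynomial"
begin

definition matpow :: "'a::semiring_1^'n^'n \<Rightarrow> nat \<Rightarrow> 'a^'n^'n" where
  "matpow A k = ((\<lambda>M. A ** M) ^^ k) (mat 1)"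

definition poly_mat :: "'a::comm_ring_1 poly \<Rightarrow> 'a^'n^'n \<Rightarrow> 'a^'n^'n" where
  "poly_mat p A = (\<Sum>i\<le>degree p. mat (coeff p i) ** matpow A i)"

definition is_minimal_poly :: "'a::field^'n^'n \<Rightarrow> 'a poly \<Rightarrow> bool" where
  "is_minimal_poly A p \<longleftrightarrow> lead_coeff p = 1 \<and> poly_mat p A = 0 \<and>
     (\<forall>q. q \<noteq> 0 \<and> poly_mat q A = 0 \<longrightarrow> degree p \<le> degree q)"

definition minimal_poly :: "'a::field^'n^'n \<Rightarrow> 'a poly" where
  "minimal_poly A = (THE p. is_minimal_poly A p)"

definition char_poly_fun :: "complex^'n^'n \<Rightarrow> complex \<Rightarrow> complex" where
  "char_poly_fun T = (\<lambda>z. det (mat z - T))"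

text \<open>Spectral norm: operator norm w.r.t. the Euclidean (2-)norm on complex^'n.\<close>
definition spectral_norm :: "complex^'n^'n \<Rightarrow> real" where
  "spectral_norm M = onorm (\<lambda>x. M *v x)"

definition resolvent_norm :: "complex^'n^'n \<Rightarrow> complex \<Rightarrow> ereal" where
  "resolvent_norm T z = (if invertible (mat z - T)
      then ereal (spectral_norm (matrix_inv (mat z - T))) else \<infinity>)"

definition conj_transpose :: "complex^'n^'n \<Rightarrow> complex^'n^'n" where
  "conj_transpose U = (\<chi> i j. cnj (U $ j $ i))"

definition unitary_mat :: "complex^'n^'n \<Rightarrow> bool" where
  "unitary_mat U \<longleftrightarrow> conj_transpose U ** U = mat 1 \<and> U ** conj_transpose U = mat 1"

definition unitarily_similar :: "complex^'n^'n \<Rightarrow> complex^'n^'n \<Rightarrow> bool" where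
  "unitarily_similar A B \<longleftrightarrow> (\<exists>U. unitary_mat U \<and> B = U ** A ** conj_transpose U)"

end

(*
  If (A - a)(A - b) = 0 then (zI - A)(A - (a + b - z)I) = (z - a)(z - b)I, so for z outside {a, b}
  the resolvent norm of A equals ||A - wI|| / |(z - a)(z - b)| with w = a + b - z.  Equal
  pseudospectra of A and B therefore give ||A - wI|| = ||B - wI|| for all w, the two excluded
  values following by continuity.

  Schur triangularisation starting from an eigenvector for p shows that a non-scalar A with
  (A - p)(A - q) = 0 and characteristic polynomial (z - p)(z - q)^2 is unitarily similar to
  [[p, r, 0], [0, q, 0], [0, 0, q]] with r >= 0; the common characteristic polynomial fixes which
  root is the double one for both A and B.  Since ||A - qI|| = sqrt(|p - q|^2 + r^2), the number r
  is the same for A and B, hence A and B are unitarily similar.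
*)
theory Submission
  imports Defs
begin

lemma matrix_mul_mat_nth: "(A ** mat c) $ i $ j = A $ i $ j * (c :: 'a::semiring_1)"
  by (simp add: matrix_matrix_mult_def mat_def if_distrib[of "\<lambda>x. _ * x"] cong: if_cong)

lemma mat_matrix_mul_nth: "(mat c ** A) $ i $ j = (c :: 'a::semiring_1) * A $ i $ j"
  by (simp add: matrix_matrix_mult_def mat_def if_distrib[of "\<lambda>x. x * _"] cong: if_cong)

lemma matrix_mul_mat_commute: "A ** mat c = mat c ** (A :: 'a::comm_semiring_1^'n^'n)"
  by (simp add: vec_eq_iff matrix_mul_mat_nth mat_matrix_mul_nth mult.commute)

lemma matrix_mul_mat_left_commute: "X ** (mat c ** Y) = mat c ** (X ** Y)"
  for X :: "'a::comm_semiring_1^'n^'n"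
proof -
  have "X ** (mat c ** Y) = (X ** mat c) ** Y"
    by (rule matrix_mul_assoc)
  also have "X ** mat c = mat c ** X"
    by (rule matrix_mul_mat_commute)
  finally show ?thesis
    by (simp add: matrix_mul_assoc)
qed

lemma mat_mult_mat: "mat a ** mat b = (mat (a * b) :: 'a::semiring_1^'n^'n)"
  by (simp add: vec_eq_iff mat_matrix_mul_nth) (simp add: mat_def)

lemma mat_diff: "mat (a - b) = (mat a - mat b :: 'a::group_add^'n^'n)"
  by (simp add: mat_def vec_eq_iff)

lemma matrix_diff_ldistrib: "A ** (B - C) = A ** B - A ** C" for A :: "'a::ring_1^'n^'m"
  by (simp add: vec_eq_iff matrix_matrix_mult_def sum_subtractf algebra_simps)

lemma matrix_diff_rdistrib: "(B - C) ** A = B ** A - C ** A" for A :: "'a::ring_1^'n^'m"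
  by (simp add: vec_eq_iff matrix_matrix_mult_def sum_subtractf algebra_simps)

lemma mat_vector_mult: "mat c *v x = c *s (x :: 'a::semiring_1^'n)"
  by (simp add: vec_eq_iff matrix_vector_mult_def mat_def if_distrib[of "\<lambda>x. x * _"] cong: if_cong)

lemma matrix_vector_mult_scalar: "A *v (c *s x) = c *s (A *v x)"
  for A :: "'a::comm_semiring_1^'n^'m"
  by (simp add: vec_eq_iff matrix_vector_mult_def sum_distrib_left algebra_simps)

definition mat3 :: "'a::zero \<Rightarrow> 'a \<Rightarrow> 'a \<Rightarrow> 'a \<Rightarrow> 'a \<Rightarrow> 'a \<Rightarrow> 'a \<Rightarrow> 'a \<Rightarrow> 'a \<Rightarrow> 'a^3^3" where
  "mat3 a b c d e f g h i = vector [vector [a, b, c], vector [d, e, f], vector [g, h, i]]"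

lemma mat3_nth [simp]:
  "mat3 a b c d e f g h i $ 1 $ 1 = a" "mat3 a b c d e f g h i $ 1 $ 2 = b" "mat3 a b c d e f g h i $ 1 $ 3 = c"
  "mat3 a b c d e f g h i $ 2 $ 1 = d" "mat3 a b c d e f g h i $ 2 $ 2 = e" "mat3 a b c d e f g h i $ 2 $ 3 = f"
  "mat3 a b c d e f g h i $ 3 $ 1 = g" "mat3 a b c d e f g h i $ 3 $ 2 = h" "mat3 a b c d e f g h i $ 3 $ 3 = i"
  by (simp_all add: mat3_def)

lemma mat3_eta:
  "(M :: 'a::zero^3^3) = mat3 (M$1$1) (M$1$2) (M$1$3) (M$2$1) (M$2$2) (M$2$3) (M$3$1) (M$3$2) (M$3$3)"
  by (simp add: vec_eq_iff forall_3)

lemma mat3_cases: obtains a b c d e f g h i where "(M :: 'a::zero^3^3) = mat3 a b c d e f g h i"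
  using mat3_eta by blast

lemma mat3_eq_iff: "mat3 a b c d e f g h i = mat3 a' b' c' d' e' f' g' h' i' \<longleftrightarrow>
    a = a' \<and> b = b' \<and> c = c' \<and> d = d' \<and> e = e' \<and> f = f' \<and> g = g' \<and> h = h' \<and> i = i'"
  by (auto simp: vec_eq_iff forall_3 mat3_def)

lemma mat3_mult: "mat3 a b c d e f g h i ** mat3 a' b' c' d' e' f' g' h' i' =
    mat3 (a*a' + b*d' + c*g') (a*b' + b*e' + c*h') (a*c' + b*f' + c*i')
         (d*a' + e*d' + f*g') (d*b' + e*e' + f*h') (d*c' + e*f' + f*i')
         (g*a' + h*d' + i*g') (g*b' + h*e' + i*h') (g*c' + h*f' + i*i')"
  for a b c d e f g h i a' b' c' d' e' f' g' h' i' :: "'a::semiring_1"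
  by (simp add: vec_eq_iff forall_3 matrix_matrix_mult_def sum_3)

lemma mat3_mat: "(mat x :: 'a::zero^3^3) = mat3 x 0 0 0 x 0 0 0 x"
  by (simp add: vec_eq_iff forall_3 mat_def)

lemma mat3_add: "mat3 a b c d e f g h i + mat3 a' b' c' d' e' f' g' h' i' =
    mat3 (a+a') (b+b') (c+c') (d+d') (e+e') (f+f') (g+g') (h+h') (i+i')"
  for a b c d e f g h i a' b' c' d' e' f' g' h' i' :: "'a::monoid_add"
  by (simp add: vec_eq_iff forall_3)

lemma mat3_diff: "mat3 a b c d e f g h i - mat3 a' b' c' d' e' f' g' h' i' =
    mat3 (a-a') (b-b') (c-c') (d-d') (e-e') (f-f') (g-g') (h-h') (i-i')"
  for a b c d e f g h i a' b' c' d' e' f' g' h' i' :: "'a::group_add"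
  by (simp add: vec_eq_iff forall_3)

lemma mat3_zero: "(0 :: 'a::zero^3^3) = mat3 0 0 0 0 0 0 0 0 0"
  by (simp add: vec_eq_iff forall_3)

lemma mat3_conj_transpose: "conj_transpose (mat3 a b c d e f g h i) =
    mat3 (cnj a) (cnj d) (cnj g) (cnj b) (cnj e) (cnj h) (cnj c) (cnj f) (cnj i)"
  by (simp add: vec_eq_iff forall_3 conj_transpose_def)

lemmas mat3_simps = mat3_mult mat3_mat mat3_add mat3_diff mat3_zero mat3_eq_iff mat3_conj_transpose

lemma matrix_vector_mult_3: "(M :: 'a::semiring_1^3^3) *v vector [x, y, z] =
    vector [M$1$1*x + M$1$2*y + M$1$3*z, M$2$1*x + M$2$2*y + M$2$3*z, M$3$1*x + M$3$2*y + M$3$3*z]"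
  by (simp add: vec_eq_iff forall_3 matrix_vector_mult_def sum_3)

lemma vector_3_eq_iff:
  "(vector [a, b, c] :: 'a::zero^3) = vector [a', b', c'] \<longleftrightarrow> a = a' \<and> b = b' \<and> c = c'"
  by (auto simp: vec_eq_iff forall_3)

lemma vector_3_eta: "(v :: 'a::zero^3) = vector [v$1, v$2, v$3]"
  by (simp add: vec_eq_iff forall_3)

lemma scalar_mult_vector_3: "c *s vector [x, y, z] = (vector [c*x, c*y, c*z] :: 'a::semiring_1^3)"
  by (simp add: vec_eq_iff forall_3)

lemma matpow_0 [simp]: "matpow A 0 = mat 1"
  by (simp add: matpow_def)

lemma matpow_Suc [simp]: "matpow A (Suc k) = A ** matpow A k"
  by (simp add: matpow_def)

lemma poly_mat_eq_sum:
  fixes A :: "'a::comm_ring_1^'n^'n"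
  assumes "degree p \<le> N"
  shows "poly_mat p A = (\<Sum>i\<le>N. mat (coeff p i) ** matpow A i)"
proof -
  have "(\<Sum>i\<le>N. mat (coeff p i) ** matpow A i) = (\<Sum>i\<le>degree p. mat (coeff p i) ** matpow A i)"
    using assms by (intro sum.mono_neutral_right) (auto simp: coeff_eq_0)
  then show ?thesis
    by (simp add: poly_mat_def)
qed

lemma poly_mat_diff:
  fixes A :: "'a::comm_ring_1^'n^'n"
  shows "poly_mat (p - q) A = poly_mat p A - poly_mat q A"
proof -
  define N where "N = max (degree p) (degree q)"
  have "degree (p - q) \<le> N" "degree p \<le> N" "degree q \<le> N"
    by (auto simp: N_def degree_diff_le)
  then show ?thesis
    by (simp add: poly_mat_eq_sum[of _ N] mat_diff matrix_diff_rdistrib sum_subtractf)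
qed

lemma matrix_mul_sum_right: "X ** sum f S = (\<Sum>i\<in>S. X ** f i :: 'a::semiring_1^'n^'n)"
  by (induction S rule: infinite_finite_induct) (simp_all add: matrix_add_ldistrib)

lemma poly_mat_smult:
  fixes A :: "'a::comm_ring_1^'n^'n"
  shows "poly_mat (smult c p) A = mat c ** poly_mat p A"
proof -
  have "poly_mat (smult c p) A = (\<Sum>i\<le>degree p. mat (c * coeff p i) ** matpow A i)"
    by (simp add: poly_mat_eq_sum[OF degree_smult_le])
  also have "\<dots> = mat c ** poly_mat p A"
    by (simp add: poly_mat_def matrix_mul_assoc mat_mult_mat matrix_mul_sum_right)
  finally show ?thesis .
qed

lemma poly_mat_monic_linear: "poly_mat [:- c, 1:] A = A - mat (c :: 'a::comm_ring_1)"
  by (simp add: poly_mat_def vec_eq_iff mat_matrix_mul_nth) (simp add: mat_def)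

lemma poly_mat_monic_quadratic:
  fixes A :: "'a::comm_ring_1^'n^'n"
  shows "poly_mat [:a * b, - (a + b), 1:] A = (A - mat a) ** (A - mat b)"
  by (simp add: poly_mat_def numeral_2_eq_2 vec_eq_iff matrix_diff_ldistrib matrix_diff_rdistrib
      matrix_mul_mat_nth mat_matrix_mul_nth) (simp add: mat_def algebra_simps)

lemma cayley_hamilton_3:
  fixes A :: "'a::comm_ring_1^3^3"
  defines "t \<equiv> A$1$1 + A$2$2 + A$3$3"
    and "s \<equiv> A$1$1*A$2$2 - A$1$2*A$2$1 + A$1$1*A$3$3 - A$1$3*A$3$1 + A$2$2*A$3$3 - A$2$3*A$3$2"
  shows "poly_mat [:- det A, s, - t, 1:] A = 0"
proof -
  obtain a b c d e f g h i where A: "A = mat3 a b c d e f g h i"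
    by (rule mat3_cases)
  show ?thesis
    unfolding poly_mat_def t_def s_def det_3
    by (simp add: numeral_3_eq_3 A) (simp only: mat3_simps, simp add: algebra_simps)
qed

lemma is_minimal_poly_unique:
  assumes "is_minimal_poly A p" "is_minimal_poly A q"
  shows "p = q"
proof (rule ccontr)
  assume "p \<noteq> q"
  have "p \<noteq> 0" "q \<noteq> 0"
    using assms by (auto simp: is_minimal_poly_def)
  then have deg: "degree p = degree q"
    using assms unfolding is_minimal_poly_def by (meson le_antisym)
  have "poly_mat (p - q) A = 0"
    using assms by (simp add: poly_mat_diff is_minimal_poly_def)
  then have "degree p \<le> degree (p - q)"
    using assms(1) \<open>p \<noteq> q\<close> by (simp add: is_minimal_poly_def)
  moreover have "degree (p - q) \<le> degree p"
    using deg by (simp add: degree_diff_le)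
  moreover have "coeff (p - q) (degree p) = 0"
    using assms deg by (simp add: is_minimal_poly_def)
  ultimately show False
    using \<open>p \<noteq> q\<close> by (metis le_antisym leading_coeff_0_iff right_minus_eq)
qed

lemma is_minimal_poly_exists:
  fixes A :: "'a::field^'n^'n"
  assumes "q0 \<noteq> 0" "poly_mat q0 A = 0"
  shows "\<exists>p. is_minimal_poly A p"
proof -
  define S where "S = {q. q \<noteq> 0 \<and> poly_mat q A = 0}"
  obtain q where q: "q \<in> S" "\<And>r. r \<in> S \<Longrightarrow> degree q \<le> degree r"
    using ex_has_least_nat[of "\<lambda>q. q \<in> S" q0 degree] assms by (auto simp: S_def)
  define p where "p = smult (inverse (lead_coeff q)) q"
  have "q \<noteq> 0" "poly_mat q A = 0"
    using q(1) by (auto simp: S_def)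
  then have "is_minimal_poly A p"
    using q(2) by (auto simp: is_minimal_poly_def p_def poly_mat_smult S_def)
  then show ?thesis ..
qed

lemma minimal_poly_is_minimal_3:
  fixes A :: "'a::field^3^3"
  shows "is_minimal_poly A (minimal_poly A)"
proof -
  have "\<exists>p. is_minimal_poly A p"
    using cayley_hamilton_3[of A] by (intro is_minimal_poly_exists[of "[:- det A, _, _, 1:]"]) auto
  then have "\<exists>!p. is_minimal_poly A p"
    using is_minimal_poly_unique by blast
  then show ?thesis
    unfolding minimal_poly_def by (rule theI')
qed

lemma monic_quadratic_splits:
  fixes p :: "complex poly"
  assumes "degree p = 2" "lead_coeff p = 1"
  obtains a b where "p = [:a * b, - (a + b), 1:]"
proof -
  define c0 c1 where "c0 = coeff p 0" and "c1 = coeff p 1"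
  have p: "p = [:c0, c1, 1:]"
    using assms by (intro poly_eqI) (auto simp: c0_def c1_def coeff_pCons coeff_eq_0 numeral_2_eq_2
        split: nat.splits)
  define r where "r = csqrt (c1^2 - 4 * c0)"
  have "r^2 = c1^2 - 4 * c0"
    by (simp add: r_def)
  then have "p = [:(- c1 + r) / 2 * ((- c1 - r) / 2), - ((- c1 + r) / 2 + (- c1 - r) / 2), 1:]"
    by (simp add: p field_simps power2_eq_square)
  then show ?thesis
    by (rule that)
qed

lemma minimal_poly_degree_gt_1_not_scalar:
  fixes A :: "'a::field^3^3"
  assumes "degree (minimal_poly A) > 1"
  shows "A \<noteq> mat c"
proof
  assume "A = mat c"
  then have "poly_mat [:- c, 1:] A = 0"
    by (simp add: poly_mat_monic_linear)
  moreover have "[:- c, 1:] \<noteq> 0"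
    by simp
  ultimately have "degree (minimal_poly A) \<le> degree [:- c, 1:]"
    using minimal_poly_is_minimal_3[of A] unfolding is_minimal_poly_def by blast
  then show False
    using assms by simp
qed

section \<open>Unitary matrices\<close>

lemma conj_transpose_conj_transpose [simp]: "conj_transpose (conj_transpose M) = M"
  by (simp add: conj_transpose_def vec_eq_iff)

lemma conj_transpose_mult: "conj_transpose (A ** B) = conj_transpose B ** conj_transpose A"
  by (simp add: conj_transpose_def vec_eq_iff matrix_matrix_mult_def mult.commute)

lemma unitary_conj_transpose: "unitary_mat U \<Longrightarrow> unitary_mat (conj_transpose U)"
  by (simp add: unitary_mat_def)

lemma unitary_mult: "unitary_mat U \<Longrightarrow> unitary_mat V \<Longrightarrow> unitary_mat (U ** V)"
  unfolding unitary_mat_def conj_transpose_mult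
  by (metis matrix_mul_assoc matrix_mul_lid matrix_mul_rid)

lemma norm_squared_vec_complex: "complex_of_real ((norm x)\<^sup>2) = (\<Sum>i\<in>UNIV. cnj (x$i) * x$i)"
  for x :: "complex^'n"
proof -
  have "(norm x)\<^sup>2 = (\<Sum>i\<in>UNIV. (cmod (x$i))\<^sup>2)"
    by (simp add: norm_vec_def L2_set_def sum_nonneg)
  then show ?thesis
    by (simp only: of_real_sum complex_norm_square) (simp add: mult.commute)
qed

lemma conj_transpose_adjoint:
  "(\<Sum>i\<in>UNIV. cnj ((M *v x)$i) * y$i) = (\<Sum>i\<in>UNIV. cnj (x$i) * (conj_transpose M *v y)$i)"
  unfolding matrix_vector_mult_def conj_transpose_def
  by (simp add: sum_distrib_left sum_distrib_right mult_ac) (rule sum.swap)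

lemma unitary_norm_preserving:
  assumes "unitary_mat U"
  shows "norm (U *v x) = norm x"
proof -
  have "conj_transpose U ** U = mat 1"
    using assms by (simp add: unitary_mat_def)
  then have "complex_of_real ((norm (U *v x))\<^sup>2) = complex_of_real ((norm x)\<^sup>2)"
    by (simp only: norm_squared_vec_complex conj_transpose_adjoint matrix_vector_mul_assoc
        matrix_vector_mul_lid)
  then have "(norm (U *v x))\<^sup>2 = (norm x)\<^sup>2"
    using of_real_eq_iff by blast
  then show ?thesis
    by (simp add: power2_eq_iff_nonneg)
qed

lemma unitary_conj_cancel:
  assumes "unitary_mat U"
  shows "conj_transpose U ** (U ** M ** conj_transpose U) ** U = M"
proof -
  have "conj_transpose U ** (U ** M ** conj_transpose U) ** U
      = (conj_transpose U ** U) ** M ** (conj_transpose U ** U)"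
    by (simp add: matrix_mul_assoc)
  then show ?thesis
    using assms by (simp add: unitary_mat_def)
qed

lemma unitary_conj_mat:
  assumes "unitary_mat U"
  shows "U ** mat z ** conj_transpose U = mat z"
proof -
  have "U ** mat z ** conj_transpose U = mat z ** (U ** conj_transpose U)"
    unfolding matrix_mul_mat_commute[of U] by (rule matrix_mul_assoc[symmetric])
  then show ?thesis
    using assms by (simp add: unitary_mat_def)
qed

lemma matrix_sandwich_diff: "U ** (X - Y) ** W = U ** X ** W - U ** Y ** W"
  for U X Y W :: "'a::ring_1^'n^'n"
  by (simp add: matrix_diff_ldistrib matrix_diff_rdistrib)

lemma unitary_conj_mult:
  assumes "unitary_mat U"
  shows "U ** (X ** Y) ** conj_transpose U = (U ** X ** conj_transpose U) ** (U ** Y ** conj_transpose U)"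
  using assms unfolding unitary_mat_def by (metis matrix_mul_assoc matrix_mul_rid)

lemma unitarily_similar_sym: "unitarily_similar A B \<Longrightarrow> unitarily_similar B A"
  unfolding unitarily_similar_def
  by (metis conj_transpose_conj_transpose unitary_conj_cancel unitary_conj_transpose)

lemma unitarily_similar_trans:
  "unitarily_similar A B \<Longrightarrow> unitarily_similar B C \<Longrightarrow> unitarily_similar A C"
  unfolding unitarily_similar_def
  by (metis conj_transpose_mult matrix_mul_assoc unitary_mult)

lemma unitarily_similar_shift:
  "unitarily_similar A B \<Longrightarrow> unitarily_similar (A - mat c) (B - mat c)"
  unfolding unitarily_similar_def by (metis matrix_sandwich_diff unitary_conj_mat)

section \<open>The spectral norm\<close>

lemma norm_scalar_mult_vec: "norm (c *s x) = norm c * norm (x :: 'a::real_normed_field^'n)"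
  by (simp add: norm_vec_def norm_mult L2_set_right_distrib)

lemma spectral_norm_nonneg: "0 \<le> spectral_norm M"
  unfolding spectral_norm_def by (rule onorm_pos_le[OF matrix_vector_mul_bounded_linear])

lemma spectral_norm_le: "(\<And>x. norm (M *v x) \<le> C * norm x) \<Longrightarrow> spectral_norm M \<le> C"
  unfolding spectral_norm_def by (rule onorm_le)

lemma norm_le_spectral_norm: "norm (M *v x) \<le> spectral_norm M * norm x"
  unfolding spectral_norm_def by (rule onorm[OF matrix_vector_mul_bounded_linear])

lemma spectral_norm_unitary_conj_le:
  assumes "unitary_mat U"
  shows "spectral_norm (U ** M ** conj_transpose U) \<le> spectral_norm M"
proof (rule spectral_norm_le)
  fix x
  have "norm ((U ** M ** conj_transpose U) *v x) = norm (M *v (conj_transpose U *v x))"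
    using assms by (simp add: unitary_norm_preserving flip: matrix_vector_mul_assoc)
  also have "\<dots> \<le> spectral_norm M * norm (conj_transpose U *v x)"
    by (rule norm_le_spectral_norm)
  finally show "norm ((U ** M ** conj_transpose U) *v x) \<le> spectral_norm M * norm x"
    using assms by (simp add: unitary_norm_preserving unitary_conj_transpose)
qed

lemma spectral_norm_unitary_conj:
  assumes "unitary_mat U"
  shows "spectral_norm (U ** M ** conj_transpose U) = spectral_norm M"
  using spectral_norm_unitary_conj_le[OF assms, of M]
    spectral_norm_unitary_conj_le[OF unitary_conj_transpose[OF assms], of "U ** M ** conj_transpose U"]
  by (simp add: unitary_conj_cancel[OF assms])

lemma unitarily_similar_spectral_norm:
  "unitarily_similar A B \<Longrightarrow> spectral_norm A = spectral_norm B"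
  unfolding unitarily_similar_def by (metis spectral_norm_unitary_conj)

lemma spectral_norm_mat_mult: "spectral_norm (mat c ** M) = cmod c * spectral_norm M"
proof -
  have le: "spectral_norm (mat d ** N) \<le> cmod d * spectral_norm N" for d N
  proof (rule spectral_norm_le)
    fix x
    have "norm ((mat d ** N) *v x) = cmod d * norm (N *v x)"
      by (simp add: mat_vector_mult norm_scalar_mult_vec flip: matrix_vector_mul_assoc)
    then show "norm ((mat d ** N) *v x) \<le> cmod d * spectral_norm N * norm x"
      by (simp add: mult.assoc mult_left_mono norm_le_spectral_norm)
  qed
  show ?thesis
  proof (cases "c = 0")
    case True
    then show ?thesis
      using le[of 0 M] spectral_norm_nonneg[of "mat c ** M"] by simp
  next
    case False
    have "spectral_norm M \<le> cmod (1 / c) * spectral_norm (mat c ** M)"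
      using le[of "1 / c" "mat c ** M"] False by (simp add: matrix_mul_assoc mat_mult_mat)
    then have "cmod c * spectral_norm M \<le> spectral_norm (mat c ** M)"
      using False by (simp add: norm_divide field_simps)
    then show ?thesis
      using le[of c M] by simp
  qed
qed

lemma spectral_norm_shift_lipschitz:
  "dist (spectral_norm (A - mat v)) (spectral_norm (A - mat w)) \<le> dist v w"
proof -
  have tri: "spectral_norm (X - mat v) \<le> spectral_norm (X - mat w) + cmod (v - w)" for X v w
  proof (rule spectral_norm_le)
    fix x
    have "(X - mat v) *v x = (X - mat w) *v x - (v - w) *s x"
      by (simp add: matrix_vector_mult_diff_rdistrib mat_vector_mult vector_ssub_ldistrib)
    then have "norm ((X - mat v) *v x) \<le> norm ((X - mat w) *v x) + cmod (v - w) * norm x"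
      by (metis norm_scalar_mult_vec norm_triangle_ineq4)
    also have "\<dots> \<le> (spectral_norm (X - mat w) + cmod (v - w)) * norm x"
      by (simp add: distrib_right norm_le_spectral_norm)
    finally show "norm ((X - mat v) *v x) \<le> (spectral_norm (X - mat w) + cmod (v - w)) * norm x" .
  qed
  show ?thesis
    using tri[of A v w] tri[of A w v] by (simp add: dist_real_def dist_norm norm_minus_commute)
qed

lemma isCont_spectral_norm_shift: "isCont (\<lambda>w. spectral_norm (A - mat w)) w"
proof -
  have "continuous_on UNIV (\<lambda>w. spectral_norm (A - mat w))"
    by (rule lipschitz_on_continuous_on[of 1]) (simp add: lipschitz_on_def spectral_norm_shift_lipschitz)
  then show ?thesis
    by (simp add: continuous_on_eq_continuous_at)
qed

lemma spectral_norm_axis: "spectral_norm (axis k v) = norm (v :: complex^'n)"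
proof (rule antisym)
  have axis_mult: "axis k v *v x = axis k (\<Sum>j\<in>UNIV. v$j * x$j)" for x
    by (simp add: vec_eq_iff axis_def matrix_vector_mult_def)
  have norm_axis: "norm (axis k c) = norm c" for c :: complex
    by (simp add: norm_eq_sqrt_inner inner_axis_axis)
  show "spectral_norm (axis k v) \<le> norm v"
  proof (rule spectral_norm_le)
    fix x
    have "cmod (\<Sum>j\<in>UNIV. v$j * x$j) \<le> (\<Sum>j\<in>UNIV. \<bar>cmod (v$j)\<bar> * \<bar>cmod (x$j)\<bar>)"
      using norm_sum[of "\<lambda>j. v$j * x$j" UNIV] by (simp add: norm_mult)
    also have "\<dots> \<le> norm v * norm x"
      unfolding norm_vec_def by (rule L2_set_mult_ineq)
    finally show "norm (axis k v *v x) \<le> norm v * norm x"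
      by (simp add: axis_mult norm_axis)
  qed
  show "norm v \<le> spectral_norm (axis k v)"
  proof (cases "v = 0")
    case False
    define x where "x = (\<chi> j. cnj (v$j))"
    have "norm x = norm v"
      by (simp add: x_def norm_vec_def)
    moreover have "axis k v *v x = axis k (complex_of_real ((norm v)\<^sup>2))"
      using norm_squared_vec_complex[of v] by (simp add: axis_mult x_def mult.commute)
    ultimately have "(norm v)\<^sup>2 \<le> spectral_norm (axis k v) * norm v"
      using norm_le_spectral_norm[of "axis k v" x] by (simp add: norm_axis norm_power)
    then show ?thesis
      using False by (simp add: power2_eq_square)
  qed (simp add: spectral_norm_nonneg)
qed

section \<open>Resolvents\<close>

lemma matrix_inv_eq:
  fixes X Y :: "'a::field^'n^'n"
  assumes "X ** Y = mat 1"
  shows "invertible X" "matrix_inv X = Y"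
proof -
  have YX: "Y ** X = mat 1"
    using assms matrix_left_right_inverse by blast
  then show "invertible X"
    using assms unfolding invertible_def by blast
  then have "X ** matrix_inv X = mat 1 \<and> matrix_inv X ** X = mat 1"
    unfolding matrix_inv_def invertible_def by (rule someI_ex)
  then show "matrix_inv X = Y"
    by (metis YX matrix_mul_assoc matrix_mul_lid matrix_mul_rid)
qed

lemma matrix_inv_right: "invertible X \<Longrightarrow> X ** matrix_inv X = mat 1"
  unfolding invertible_def matrix_inv_def by (rule someI_ex[THEN conjunct1])

lemma unitary_conj_matrix_inv:
  assumes "unitary_mat U" "invertible X"
  shows "invertible (U ** X ** conj_transpose U)"
    and "matrix_inv (U ** X ** conj_transpose U) = U ** matrix_inv X ** conj_transpose U"
proof -
  have "(U ** X ** conj_transpose U) ** (U ** matrix_inv X ** conj_transpose U) = mat 1"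
    using assms by (metis matrix_inv_right unitary_conj_mat unitary_conj_mult)
  then show "invertible (U ** X ** conj_transpose U)"
    and "matrix_inv (U ** X ** conj_transpose U) = U ** matrix_inv X ** conj_transpose U"
    by (rule matrix_inv_eq)+
qed

lemma unitary_conj_invertible_iff:
  assumes "unitary_mat U"
  shows "invertible (U ** X ** conj_transpose U) \<longleftrightarrow> invertible X"
  using unitary_conj_matrix_inv(1)[OF assms] unitary_conj_matrix_inv(1)[OF unitary_conj_transpose[OF assms]]
  by (metis conj_transpose_conj_transpose unitary_conj_cancel[OF assms])

lemma resolvent_norm_unitary_conj:
  assumes "unitary_mat U"
  shows "resolvent_norm (U ** A ** conj_transpose U) z = resolvent_norm A z"
proof -
  have "mat z - U ** A ** conj_transpose U = U ** (mat z - A) ** conj_transpose U"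
    using assms by (simp add: matrix_sandwich_diff unitary_conj_mat)
  then show ?thesis
    using assms by (simp add: resolvent_norm_def unitary_conj_invertible_iff unitary_conj_matrix_inv
        spectral_norm_unitary_conj)
qed

lemma char_poly_fun_unitary_conj:
  assumes "unitary_mat U"
  shows "char_poly_fun (U ** A ** conj_transpose U) = char_poly_fun A"
proof
  fix z
  have "mat z - U ** A ** conj_transpose U = U ** (mat z - A) ** conj_transpose U"
    using assms by (simp add: matrix_sandwich_diff unitary_conj_mat)
  moreover have "det U * det (conj_transpose U) = 1"
    using assms by (metis det_I det_mul unitary_mat_def)
  ultimately show "char_poly_fun (U ** A ** conj_transpose U) z = char_poly_fun A z"
    unfolding char_poly_fun_def by (simp only: det_mul) (simp add: algebra_simps)
qed

lemma unitarily_similar_resolvent_norm: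
  "unitarily_similar A B \<Longrightarrow> resolvent_norm A z = resolvent_norm B z"
  unfolding unitarily_similar_def by (metis resolvent_norm_unitary_conj)

lemma unitarily_similar_char_poly_fun:
  "unitarily_similar A B \<Longrightarrow> char_poly_fun A = char_poly_fun B"
  unfolding unitarily_similar_def by (metis char_poly_fun_unitary_conj)

lemma quadratic_resolvent_identity:
  fixes T :: "'a::comm_ring_1^'n^'n"
  shows "(mat z - T) ** (T - mat (a + b - z)) = mat ((z - a) * (z - b)) - (T - mat a) ** (T - mat b)"
  by (simp add: vec_eq_iff matrix_diff_ldistrib matrix_diff_rdistrib matrix_mul_mat_nth mat_matrix_mul_nth)
     (simp add: mat_def algebra_simps)

lemma resolvent_norm_quadratic:
  assumes "(T - mat a) ** (T - mat b) = 0" "z \<noteq> a" "z \<noteq> b"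
  shows "resolvent_norm T z = ereal (spectral_norm (T - mat (a + b - z)) / cmod ((z - a) * (z - b)))"
proof -
  define d where "d = (z - a) * (z - b)"
  have "d \<noteq> 0"
    using assms by (simp add: d_def)
  have "(mat z - T) ** (mat (1 / d) ** (T - mat (a + b - z))) = mat (1 / d) ** mat d"
    using assms(1) by (simp add: matrix_mul_mat_left_commute quadratic_resolvent_identity d_def)
  also have "\<dots> = mat 1"
    using \<open>d \<noteq> 0\<close> by (simp add: mat_mult_mat)
  finally have "invertible (mat z - T)" "matrix_inv (mat z - T) = mat (1 / d) ** (T - mat (a + b - z))"
    by (rule matrix_inv_eq)+
  then show ?thesis
    by (simp add: resolvent_norm_def spectral_norm_mat_mult norm_divide d_def)
qed

lemma equal_resolvent_norms_imp_shift_norms: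
  assumes "(A - mat a) ** (A - mat b) = 0" "(B - mat a) ** (B - mat b) = 0"
    and "\<And>z. resolvent_norm A z = resolvent_norm B z"
  shows "spectral_norm (A - mat w) = spectral_norm (B - mat w)"
proof -
  define f g where "f v = spectral_norm (A - mat v)" and "g v = spectral_norm (B - mat v)" for v
  have "f v = g v" if "v \<noteq> a" "v \<noteq> b" for v
  proof -
    have "a + b - v \<noteq> a" "a + b - v \<noteq> b"
      using that by auto
    then show ?thesis
      using assms(3)[of "a + b - v"] that unfolding f_def g_def
      by (simp add: resolvent_norm_quadratic[OF assms(1)] resolvent_norm_quadratic[OF assms(2)])
  qed
  then have "eventually (\<lambda>v. f v = g v) (at w)"
    using eventually_neq_at_within[of a w UNIV] eventually_neq_at_within[of b w UNIV]
    by (auto elim: eventually_elim2)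
  moreover have "(f \<longlongrightarrow> f w) (at w)" "(g \<longlongrightarrow> g w) (at w)"
    using isCont_spectral_norm_shift unfolding f_def g_def isCont_def by blast+
  ultimately have "(g \<longlongrightarrow> f w) (at w)"
    using Lim_transform_eventually by blast
  then have "f w = g w"
    using \<open>(g \<longlongrightarrow> g w) (at w)\<close> by (rule tendsto_unique[OF trivial_limit_at])
  then show ?thesis
    by (simp add: f_def g_def)
qed

section \<open>Unitary triangularisation of three-by-three matrices\<close>

lemma eigenvector_of_annihilated:
  fixes A :: "'a::field^'n^'n"
  assumes "(A - mat a) ** (A - mat b) = 0" "A \<noteq> mat b"
  obtains u where "u \<noteq> 0" "A *v u = a *s u"
proof -
  obtain e where e: "(A - mat b) *v e \<noteq> 0"
    using assms(2) matrix_eq[of "A - mat b" 0] by auto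
  define u where "u = (A - mat b) *v e"
  have "(A - mat a) *v u = 0"
    using assms(1) by (simp add: u_def matrix_vector_mul_assoc)
  then have "A *v u = a *s u"
    by (simp add: matrix_vector_mult_diff_rdistrib mat_vector_mult)
  then show ?thesis
    using e that u_def by blast
qed

definition givens_23 :: "complex \<Rightarrow> complex \<Rightarrow> complex^3^3" where
  "givens_23 c s = mat3 1 0 0 0 c s 0 (- cnj s) (cnj c)"

definition givens_12 :: "complex \<Rightarrow> complex \<Rightarrow> complex^3^3" where
  "givens_12 c s = mat3 c s 0 (- cnj s) (cnj c) 0 0 0 1"

lemma unitary_givens_23: "cnj c * c + cnj s * s = 1 \<Longrightarrow> unitary_mat (givens_23 c s)"
  unfolding unitary_mat_def givens_23_def by (simp add: mat3_simps algebra_simps)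

lemma unitary_givens_12: "cnj c * c + cnj s * s = 1 \<Longrightarrow> unitary_mat (givens_12 c s)"
  unfolding unitary_mat_def givens_12_def by (simp add: mat3_simps algebra_simps)

lemma of_real_sqrt_norm_squares:
  "complex_of_real (sqrt ((cmod x)\<^sup>2 + (cmod y)\<^sup>2))
    * complex_of_real (sqrt ((cmod x)\<^sup>2 + (cmod y)\<^sup>2)) = cnj x * x + cnj y * y"
proof -
  have "complex_of_real (sqrt ((cmod x)\<^sup>2 + (cmod y)\<^sup>2))
      * complex_of_real (sqrt ((cmod x)\<^sup>2 + (cmod y)\<^sup>2)) = complex_of_real ((cmod x)\<^sup>2) + complex_of_real ((cmod y)\<^sup>2)"
    by (simp only: real_sqrt_mult_self abs_of_nonneg add_nonneg_nonneg zero_le_power2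
        flip: of_real_mult of_real_add)
  then show ?thesis
    by (simp only: complex_norm_square) (simp add: mult.commute)
qed

lemma normalized_pair:
  fixes x y :: complex
  defines "r \<equiv> complex_of_real (sqrt ((cmod x)\<^sup>2 + (cmod y)\<^sup>2))"
  assumes "x \<noteq> 0 \<or> y \<noteq> 0"
  shows "r \<noteq> 0" and "cnj (x / r) * (x / r) + cnj (y / r) * (y / r) = 1"
proof -
  show "r \<noteq> 0"
    using assms(2) by (simp add: r_def add_nonneg_eq_0_iff)
  have "cnj (x / r) * (x / r) + cnj (y / r) * (y / r) = (cnj x * x + cnj y * y) / (r * r)"
    by (simp add: r_def add_divide_distrib)
  also have "\<dots> = 1"
    using \<open>r \<noteq> 0\<close> by (simp add: of_real_sqrt_norm_squares[of x y, folded r_def, symmetric])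
  finally show "cnj (x / r) * (x / r) + cnj (y / r) * (y / r) = 1" .
qed

lemma givens_rotation_exists:
  fixes x y :: complex
  obtains c s where "cnj c * c + cnj s * s = 1"
    and "c * x + s * y = complex_of_real (sqrt ((cmod x)\<^sup>2 + (cmod y)\<^sup>2))"
    and "- cnj s * x + cnj c * y = 0"
proof (cases "x = 0 \<and> y = 0")
  case True
  then show ?thesis
    by (intro that[of 1 0]) simp_all
next
  case False
  define r where "r = complex_of_real (sqrt ((cmod x)\<^sup>2 + (cmod y)\<^sup>2))"
  have "r \<noteq> 0" "cnj (cnj x / r) * (cnj x / r) + cnj (cnj y / r) * (cnj y / r) = 1"
    using normalized_pair[of "cnj x" "cnj y"] False by (simp_all add: r_def)
  moreover have "cnj x / r * x + cnj y / r * y = (cnj x * x + cnj y * y) / r"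
    by (simp add: add_divide_distrib)
  moreover have "cnj x * x + cnj y * y = r * r"
    unfolding r_def by (rule of_real_sqrt_norm_squares[symmetric])
  ultimately show ?thesis
    using that[of "cnj x / r" "cnj y / r"] by (simp add: r_def field_simps)
qed

lemma unitary_to_first_axis:
  fixes u :: "complex^3"
  obtains W \<rho> where "unitary_mat W" "W *v u = vector [\<rho>, 0, 0]"
proof -
  obtain c1 s1 where g1: "cnj c1 * c1 + cnj s1 * s1 = 1"
    "c1 * u$2 + s1 * u$3 = complex_of_real (sqrt ((cmod (u$2))\<^sup>2 + (cmod (u$3))\<^sup>2))"
    "- cnj s1 * u$2 + cnj c1 * u$3 = 0"
    by (rule givens_rotation_exists)
  define r where "r = complex_of_real (sqrt ((cmod (u$2))\<^sup>2 + (cmod (u$3))\<^sup>2))"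
  obtain c2 s2 where g2: "cnj c2 * c2 + cnj s2 * s2 = 1"
    "c2 * u$1 + s2 * r = complex_of_real (sqrt ((cmod (u$1))\<^sup>2 + (cmod r)\<^sup>2))"
    "- cnj s2 * u$1 + cnj c2 * r = 0"
    by (rule givens_rotation_exists)
  have "givens_23 c1 s1 *v u = vector [u$1, r, 0]"
    using g1 by (subst vector_3_eta[of u]) (simp add: givens_23_def matrix_vector_mult_3 r_def)
  then have "(givens_12 c2 s2 ** givens_23 c1 s1) *v u
      = vector [complex_of_real (sqrt ((cmod (u$1))\<^sup>2 + (cmod r)\<^sup>2)), 0, 0]"
    using g2 by (simp add: givens_12_def matrix_vector_mult_3 flip: matrix_vector_mul_assoc)
  moreover have "unitary_mat (givens_12 c2 s2 ** givens_23 c1 s1)"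
    using g1 g2 by (simp add: unitary_mult unitary_givens_12 unitary_givens_23)
  ultimately show ?thesis
    using that by blast
qed

lemma eigenvector_first_column:
  fixes A :: "complex^3^3"
  assumes "A *v u = l *s u" "u \<noteq> 0"
  obtains x1 x2 d11 d12 d21 d22 where "unitarily_similar A (mat3 l x1 x2 0 d11 d12 0 d21 d22)"
proof -
  obtain W \<rho> where W: "unitary_mat W" "W *v u = vector [\<rho>, 0, 0]"
    by (rule unitary_to_first_axis)
  have "\<rho> \<noteq> 0"
  proof
    assume "\<rho> = 0"
    then have "W *v u = 0"
      using W(2) by (simp add: vec_eq_iff forall_3)
    then show False
      using assms(2) unitary_norm_preserving[OF W(1), of u] by simp
  qed
  define T where "T = W ** A ** conj_transpose W"
  have "T *v (W *v u) = W *v (A *v u)"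
    using W(1) unfolding T_def unitary_mat_def
    by (metis matrix_mul_assoc matrix_mul_rid matrix_vector_mul_assoc)
  also have "\<dots> = l *s (W *v u)"
    by (simp add: assms(1) matrix_vector_mult_scalar)
  finally have "T$1$1 * \<rho> = l * \<rho> \<and> T$2$1 * \<rho> = 0 \<and> T$3$1 * \<rho> = 0"
    using W(2) by (simp add: matrix_vector_mult_3 scalar_mult_vector_3 vector_3_eq_iff)
  then have "T = mat3 l (T$1$2) (T$1$3) 0 (T$2$2) (T$2$3) 0 (T$3$2) (T$3$3)"
    using \<open>\<rho> \<noteq> 0\<close> by (subst mat3_eta) simp
  then show ?thesis
    using that W(1) unfolding unitarily_similar_def T_def by metis
qed

lemma eigenvector_2x2:
  fixes d11 d12 d21 d22 :: complex
  obtains \<mu> w1 w2 where "w1 \<noteq> 0 \<or> w2 \<noteq> 0"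
    and "d11 * w1 + d12 * w2 = \<mu> * w1" "d21 * w1 + d22 * w2 = \<mu> * w2"
proof (cases "d21 = 0")
  case True
  then show ?thesis
    by (intro that[of 1 0 d11]) simp_all
next
  case False
  \<comment> \<open>a root of the characteristic polynomial of the block\<close>
  define \<mu> where "\<mu> = (d11 + d22 + csqrt ((d11 + d22)\<^sup>2 - 4 * (d11 * d22 - d12 * d21))) / 2"
  have "2 * \<mu> - (d11 + d22) = csqrt ((d11 + d22)\<^sup>2 - 4 * (d11 * d22 - d12 * d21))"
    unfolding \<mu>_def by (simp add: field_simps)
  then have "(2 * \<mu> - (d11 + d22))\<^sup>2 = (d11 + d22)\<^sup>2 - 4 * (d11 * d22 - d12 * d21)"
    by simp
  then have "d11 * (\<mu> - d22) + d12 * d21 = \<mu> * (\<mu> - d22)"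
    by algebra
  then show ?thesis
    using False by (intro that[of "\<mu> - d22" d21 \<mu>]) (simp_all add: algebra_simps)
qed

lemma unit_eigenvector_2x2:
  fixes d11 d12 d21 d22 :: complex
  obtains \<mu> p q where "cnj p * p + cnj q * q = 1" "d11 * p + d12 * q = \<mu> * p" "d21 * p + d22 * q = \<mu> * q"
proof -
  obtain \<mu> w1 w2 where w: "w1 \<noteq> 0 \<or> w2 \<noteq> 0"
    "d11 * w1 + d12 * w2 = \<mu> * w1" "d21 * w1 + d22 * w2 = \<mu> * w2"
    by (rule eigenvector_2x2)
  define r where "r = complex_of_real (sqrt ((cmod w1)\<^sup>2 + (cmod w2)\<^sup>2))"
  have "r \<noteq> 0" "cnj (w1 / r) * (w1 / r) + cnj (w2 / r) * (w2 / r) = 1"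
    using normalized_pair[OF w(1)] by (simp_all add: r_def)
  moreover have "d11 * (w1 / r) + d12 * (w2 / r) = \<mu> * (w1 / r)" "d21 * (w1 / r) + d22 * (w2 / r) = \<mu> * (w2 / r)"
    using w(2,3) \<open>r \<noteq> 0\<close> by (simp_all add: field_simps)
  ultimately show ?thesis
    using that by blast
qed

lemma triangularize_lower_block:
  assumes "cnj p * p + cnj q * q = 1" "d11 * p + d12 * q = \<mu> * p" "d21 * p + d22 * q = \<mu> * q"
  obtains x1' x2' d2 y d3
  where "unitarily_similar (mat3 l x1 x2 0 d11 d12 0 d21 d22) (mat3 l x1' x2' 0 d2 y 0 0 d3)"
proof -
  \<comment> \<open>\<open>V\<close> maps the eigenvector \<open>(0, p, q)\<close> to the second axis\<close>
  define V where "V = givens_23 (cnj p) (cnj q)"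
  define M where "M = V ** mat3 l x1 x2 0 d11 d12 0 d21 d22 ** conj_transpose V"
  have "unitary_mat V"
    using assms(1) unfolding V_def by (intro unitary_givens_23) (simp add: mult.commute)
  have "M$3$2 = - q * (d11 * p + d12 * q) + p * (d21 * p + d22 * q)"
    by (simp add: M_def V_def givens_23_def mat3_simps algebra_simps)
  also have "\<dots> = 0"
    by (simp add: assms(2,3) algebra_simps)
  finally have "M = mat3 l (M$1$2) (M$1$3) 0 (M$2$2) (M$2$3) 0 0 (M$3$3)"
    by (subst mat3_eta) (simp add: M_def V_def givens_23_def mat3_simps)
  then show ?thesis
    using that \<open>unitary_mat V\<close> unfolding unitarily_similar_def M_def by metis
qed

lemma schur_triangularization_3:
  fixes A :: "complex^3^3"
  assumes "A *v u = l *s u" "u \<noteq> 0"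
  obtains x1 x2 d2 y d3 where "unitarily_similar A (mat3 l x1 x2 0 d2 y 0 0 d3)"
proof -
  obtain x1 x2 d11 d12 d21 d22 where first: "unitarily_similar A (mat3 l x1 x2 0 d11 d12 0 d21 d22)"
    using eigenvector_first_column[OF assms] .
  obtain \<mu> p q where "cnj p * p + cnj q * q = 1"
    "d11 * p + d12 * q = \<mu> * p" "d21 * p + d22 * q = \<mu> * q"
    by (rule unit_eigenvector_2x2)
  then obtain x1' x2' d2 y d3
    where "unitarily_similar (mat3 l x1 x2 0 d11 d12 0 d21 d22) (mat3 l x1' x2' 0 d2 y 0 0 d3)"
    by (rule triangularize_lower_block)
  then show ?thesis
    using first that unitarily_similar_trans by blast
qed

section \<open>A unitary normal form for matrices with quadratic minimal polynomial\<close>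

lemma shift_mult_commute: "(A - mat a) ** (A - mat b) = (A - mat b) ** (A - mat a)"
  for A :: "'a::comm_ring_1^'n^'n"
  by (simp add: vec_eq_iff matrix_diff_ldistrib matrix_diff_rdistrib matrix_mul_mat_nth mat_matrix_mul_nth)
    (simp add: mat_def algebra_simps)

lemma unitarily_similar_annihilated:
  assumes "unitarily_similar A T" "(A - mat a) ** (A - mat b) = 0"
  shows "(T - mat a) ** (T - mat b) = 0"
proof -
  obtain U where U: "unitary_mat U" "T = U ** A ** conj_transpose U"
    using assms(1) unfolding unitarily_similar_def by blast
  then have "(T - mat a) ** (T - mat b) = U ** ((A - mat a) ** (A - mat b)) ** conj_transpose U"
    by (simp add: unitary_conj_mult matrix_sandwich_diff unitary_conj_mat)
  then show ?thesis
    using assms(2) by simp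
qed

lemma unitarily_similar_mat: "unitarily_similar A (mat c) \<Longrightarrow> A = mat c"
  unfolding unitarily_similar_def
  by (metis unitary_conj_cancel unitary_conj_mat unitary_conj_transpose conj_transpose_conj_transpose)

lemma char_poly_fun_upper_triangular_3:
  "char_poly_fun (mat3 l x1 x2 0 d2 y 0 0 d3) z = (z - l) * (z - d2) * (z - d3)"
  by (simp add: char_poly_fun_def det_3 mat3_simps)

lemma upper_triangular_quadratic_3:
  "(mat3 a x1 x2 0 d2 y 0 0 d3 - mat a) ** (mat3 a x1 x2 0 d2 y 0 0 d3 - mat b) =
    mat3 0 (x1 * (d2 - b)) (x1 * y + x2 * (d3 - b)) 0 ((d2 - a) * (d2 - b)) (y * (d2 + d3 - a - b))
      0 0 ((d3 - a) * (d3 - b))"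
  for a b x1 x2 d2 y d3 :: "'a::comm_ring_1"
  by (simp add: mat3_simps) (simp add: algebra_simps)

lemma triangularize_annihilated:
  fixes A :: "complex^3^3"
  assumes "(A - mat a) ** (A - mat b) = 0" "A \<noteq> mat b"
  obtains x1 x2 d2 y d3 where "unitarily_similar A (mat3 a x1 x2 0 d2 y 0 0 d3)"
    and "d2 = a \<or> d2 = b" "d3 = a \<or> d3 = b"
    and "x1 * (d2 - b) = 0" "y * (d2 + d3 - a - b) = 0" "x1 * y + x2 * (d3 - b) = 0"
proof -
  obtain u where "u \<noteq> 0" "A *v u = a *s u"
    using eigenvector_of_annihilated[OF assms] .
  then obtain x1 x2 d2 y d3 where T: "unitarily_similar A (mat3 a x1 x2 0 d2 y 0 0 d3)"
    using schur_triangularization_3 by metis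
  have "mat3 0 (x1 * (d2 - b)) (x1 * y + x2 * (d3 - b)) 0 ((d2 - a) * (d2 - b)) (y * (d2 + d3 - a - b))
      0 0 ((d3 - a) * (d3 - b)) = 0"
    using unitarily_similar_annihilated[OF T assms(1)] by (simp only: upper_triangular_quadratic_3)
  then show ?thesis
    using that[OF T] by (simp add: mat3_zero mat3_eq_iff)
qed

lemma annihilated_char_poly_fun:
  fixes A :: "complex^3^3"
  assumes "(A - mat a) ** (A - mat b) = 0" "A \<noteq> mat a" "A \<noteq> mat b"
  obtains p q where "{p, q} = {a, b}" "\<And>z. char_poly_fun A z = (z - p) * (z - q)\<^sup>2"
proof -
  obtain x1 x2 d2 y d3 where T: "unitarily_similar A (mat3 a x1 x2 0 d2 y 0 0 d3)"
    and d: "d2 = a \<or> d2 = b" "d3 = a \<or> d3 = b"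
    and x: "x1 * (d2 - b) = 0" "y * (d2 + d3 - a - b) = 0" "x1 * y + x2 * (d3 - b) = 0"
    using triangularize_annihilated[OF assms(1,3)] by metis
  have char: "char_poly_fun A z = (z - a) * (z - d2) * (z - d3)" for z
    using unitarily_similar_char_poly_fun[OF T] by (simp add: char_poly_fun_upper_triangular_3)
  have "\<not> (d2 = a \<and> d3 = a \<and> a \<noteq> b)"
  proof
    assume "d2 = a \<and> d3 = a \<and> a \<noteq> b"
    then have "unitarily_similar A (mat a)"
      using T x by (simp add: mat3_mat)
    then show False
      using assms(2) unitarily_similar_mat by blast
  qed
  then consider "d2 = b" "d3 = b" | "{d2, d3} = {a, b}"
    using d by auto
  then show ?thesis
  proof cases
    case 1
    then show ?thesis
      using that[of a b] char by (simp add: power2_eq_square)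
  next
    case 2
    then show ?thesis
      using that[of b a] char by (auto simp: power2_eq_square doubleton_eq_iff)
  qed
qed

definition quad_normal_form :: "complex \<Rightarrow> complex \<Rightarrow> real \<Rightarrow> complex^3^3" where
  "quad_normal_form a b r = mat3 a (complex_of_real r) 0 0 b 0 0 0 b"

lemma unitarily_similar_quad_normal_form_row:
  "unitarily_similar (mat3 a x1 x2 0 b 0 0 0 b) (quad_normal_form a b (sqrt ((cmod x1)\<^sup>2 + (cmod x2)\<^sup>2)))"
proof -
  obtain c s where g: "cnj c * c + cnj s * s = 1"
    "c * x1 + s * x2 = complex_of_real (sqrt ((cmod x1)\<^sup>2 + (cmod x2)\<^sup>2))"
    "- cnj s * x1 + cnj c * x2 = 0"
    by (rule givens_rotation_exists)
  define V where "V = givens_23 (cnj c) (cnj s)"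
  have "unitary_mat V"
    using g(1) by (simp add: V_def unitary_givens_23 mult.commute)
  moreover have "V ** mat3 a x1 x2 0 b 0 0 0 b ** conj_transpose V
      = quad_normal_form a b (sqrt ((cmod x1)\<^sup>2 + (cmod x2)\<^sup>2))"
    using g unfolding V_def givens_23_def quad_normal_form_def
    by (simp add: mat3_simps algebra_simps flip: distrib_left distrib_right)
  ultimately show ?thesis
    unfolding unitarily_similar_def by metis
qed

lemma unitarily_similar_quad_normal_form_column:
  "unitarily_similar (mat3 a 0 x2 0 a y 0 0 a) (quad_normal_form a a (sqrt ((cmod x2)\<^sup>2 + (cmod y)\<^sup>2)))"
proof -
  define r where "r = sqrt ((cmod x2)\<^sup>2 + (cmod y)\<^sup>2)"
  obtain c s where g: "cnj c * c + cnj s * s = 1" "c * x2 + s * y = complex_of_real r"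
    "- cnj s * x2 + cnj c * y = 0"
    unfolding r_def by (rule givens_rotation_exists)
  have "c * cnj c + s * cnj s = 1"
    using g(1) by (simp add: mult.commute)
  then have "givens_12 c s ** mat3 a 0 x2 0 a y 0 0 a ** conj_transpose (givens_12 c s)
      = mat3 a 0 (complex_of_real r) 0 a 0 0 0 a"
    using g(2,3) unfolding givens_12_def
    by (simp add: mat3_simps algebra_simps flip: distrib_left distrib_right)
  then have "unitarily_similar (mat3 a 0 x2 0 a y 0 0 a) (mat3 a 0 (complex_of_real r) 0 a 0 0 0 a)"
    using unitary_givens_12[OF g(1)] unfolding unitarily_similar_def by metis
  moreover have "unitarily_similar (mat3 a 0 (complex_of_real r) 0 a 0 0 0 a) (quad_normal_form a a r)"
  proof -
    define P :: "complex^3^3" where "P = mat3 1 0 0 0 0 1 0 1 0"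
    have "unitary_mat P"
      by (simp add: P_def unitary_mat_def mat3_simps)
    moreover have "P ** mat3 a 0 (complex_of_real r) 0 a 0 0 0 a ** conj_transpose P = quad_normal_form a a r"
      by (simp add: P_def quad_normal_form_def mat3_simps)
    ultimately show ?thesis
      unfolding unitarily_similar_def by metis
  qed
  ultimately show ?thesis
    unfolding r_def by (rule unitarily_similar_trans)
qed

lemma cubic_roots_cancel:
  fixes a b d2 d3 :: complex
  assumes "d2 = a \<or> d2 = b" "d3 = a \<or> d3 = b"
    and "\<And>z. (z - a) * (z - d2) * (z - d3) = (z - a) * (z - b)\<^sup>2"
  shows "d2 = b \<and> d3 = b"
proof (cases "a = b")
  case True
  then show ?thesis
    using assms(1,2) by simp
next
  case False
  define t where "t = a - b"
  have "t \<noteq> 0"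
    using False by (simp add: t_def)
  have factors: "u = 2 * t \<and> v = 2 * t"
    if "u = t \<or> u = 2 * t" "v = t \<or> v = 2 * t" "t * u * v = t * (2 * t)\<^sup>2" for u v
    using that \<open>t \<noteq> 0\<close> by (auto simp: power2_eq_square)
  have "(2 * a - b) - a = t" "(2 * a - b) - b = 2 * t"
    by (simp_all add: t_def)
  then have "t * (2 * a - b - d2) * (2 * a - b - d3) = t * (2 * t)\<^sup>2"
    using assms(3)[of "2 * a - b"] by simp
  moreover have "2 * a - b - d = t \<or> 2 * a - b - d = 2 * t" if "d = a \<or> d = b" for d
    using that by (auto simp: t_def)
  ultimately have "2 * a - b - d2 = 2 * t \<and> 2 * a - b - d3 = 2 * t"
    using factors assms(1,2) by blast
  then show ?thesis
    by (auto simp: t_def)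
qed

lemma quad_normal_form_exists:
  fixes A :: "complex^3^3"
  assumes "(A - mat a) ** (A - mat b) = 0" "A \<noteq> mat b"
    and "\<And>z. char_poly_fun A z = (z - a) * (z - b)\<^sup>2"
  obtains r where "r \<ge> 0" "unitarily_similar A (quad_normal_form a b r)"
proof -
  obtain x1 x2 d2 y d3 where T: "unitarily_similar A (mat3 a x1 x2 0 d2 y 0 0 d3)"
    and d: "d2 = a \<or> d2 = b" "d3 = a \<or> d3 = b"
    and x: "y * (d2 + d3 - a - b) = 0" "x1 * y + x2 * (d3 - b) = 0"
    using triangularize_annihilated[OF assms(1,2)] by metis
  have "(z - a) * (z - d2) * (z - d3) = (z - a) * (z - b)\<^sup>2" for z
    using unitarily_similar_char_poly_fun[OF T] assms(3) by (metis char_poly_fun_upper_triangular_3)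
  then have "d2 = b" "d3 = b"
    using cubic_roots_cancel[OF d] by blast+
  then consider "y = 0" | "x1 = 0" "a = b"
    using x by auto
  then show ?thesis
  proof cases
    case 1
    then show ?thesis
      using that T \<open>d2 = b\<close> \<open>d3 = b\<close> unitarily_similar_quad_normal_form_row unitarily_similar_trans
      by (metis real_sqrt_ge_zero add_nonneg_nonneg zero_le_power2)
  next
    case 2
    then show ?thesis
      using that T \<open>d2 = b\<close> \<open>d3 = b\<close> unitarily_similar_quad_normal_form_column unitarily_similar_trans
      by (metis real_sqrt_ge_zero add_nonneg_nonneg zero_le_power2)
  qed
qed

lemma spectral_norm_quad_normal_form_shift:
  "spectral_norm (quad_normal_form a b r - mat b) = sqrt ((cmod (a - b))\<^sup>2 + r\<^sup>2)"
proof -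
  have "quad_normal_form a b r - mat b = axis 1 (vector [a - b, complex_of_real r, 0])"
    by (simp add: quad_normal_form_def mat3_mat mat3_diff vec_eq_iff forall_3 axis_def)
  then show ?thesis
    by (simp add: spectral_norm_axis norm_vec_def L2_set_def sum_3)
qed

lemma unitarily_similar_by_shift_norm:
  assumes "r1 \<ge> 0" "unitarily_similar A (quad_normal_form p q r1)"
    and "r2 \<ge> 0" "unitarily_similar B (quad_normal_form p q r2)"
    and "spectral_norm (A - mat q) = spectral_norm (B - mat q)"
  shows "unitarily_similar A B"
proof -
  have "sqrt ((cmod (p - q))\<^sup>2 + r1\<^sup>2) = spectral_norm (A - mat q)"
    using unitarily_similar_spectral_norm[OF unitarily_similar_shift[OF assms(2)]]
    by (simp add: spectral_norm_quad_normal_form_shift)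
  also have "\<dots> = sqrt ((cmod (p - q))\<^sup>2 + r2\<^sup>2)"
    using unitarily_similar_spectral_norm[OF unitarily_similar_shift[OF assms(4)]] assms(5)
    by (simp add: spectral_norm_quad_normal_form_shift)
  finally have "r1 = r2"
    using assms(1,3) by (simp add: power2_eq_iff_nonneg)
  then show ?thesis
    using assms(2,4) unitarily_similar_sym unitarily_similar_trans by blast
qed

theorem theorem11:
  fixes A B :: "complex^3^3"
  assumes "minimal_poly A = minimal_poly B"
    and "degree (minimal_poly A) = 2"
  shows "((\<forall>z. resolvent_norm A z = resolvent_norm B z) \<and> char_poly_fun A = char_poly_fun B)
         \<longleftrightarrow> unitarily_similar A B"
proof
  assume "unitarily_similar A B"
  then show "(\<forall>z. resolvent_norm A z = resolvent_norm B z) \<and> char_poly_fun A = char_poly_fun B"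
    by (simp add: unitarily_similar_resolvent_norm unitarily_similar_char_poly_fun)
next
  assume H: "(\<forall>z. resolvent_norm A z = resolvent_norm B z) \<and> char_poly_fun A = char_poly_fun B"
  obtain a b where ab: "minimal_poly A = [:a * b, - (a + b), 1:]"
    using monic_quadratic_splits[OF assms(2)] minimal_poly_is_minimal_3[of A]
    by (auto simp: is_minimal_poly_def)
  have ann: "(A - mat a) ** (A - mat b) = 0" "(B - mat a) ** (B - mat b) = 0"
    using minimal_poly_is_minimal_3[of A] minimal_poly_is_minimal_3[of B] ab assms(1)
    by (simp_all add: is_minimal_poly_def flip: poly_mat_monic_quadratic)
  have not_scalar: "A \<noteq> mat c" "B \<noteq> mat c" for c
    using minimal_poly_degree_gt_1_not_scalar[of A c] minimal_poly_degree_gt_1_not_scalar[of B c] assms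
    by simp_all
  obtain p q where pq: "{p, q} = {a, b}" and char: "\<And>z. char_poly_fun A z = (z - p) * (z - q)\<^sup>2"
    using annihilated_char_poly_fun[OF ann(1) not_scalar(1,1)] by metis
  have ann_pq: "(A - mat p) ** (A - mat q) = 0" "(B - mat p) ** (B - mat q) = 0"
    using ann pq shift_mult_commute by (metis doubleton_eq_iff)+
  obtain r1 where r1: "r1 \<ge> 0" "unitarily_similar A (quad_normal_form p q r1)"
    using quad_normal_form_exists[OF ann_pq(1) not_scalar(1) char] .
  obtain r2 where r2: "r2 \<ge> 0" "unitarily_similar B (quad_normal_form p q r2)"
    using quad_normal_form_exists[OF ann_pq(2) not_scalar(2)] char H by metis
  have "spectral_norm (A - mat q) = spectral_norm (B - mat q)"
    using equal_resolvent_norms_imp_shift_norms[OF ann] H by blast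
  then show "unitarily_similar A B"
    using unitarily_similar_by_shift_norm r1 r2 by blast
qed

end
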